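(* Let $m\ge3$, $(f,\Gamma)$ an elliptic data and $g=e^{2\rho}g_0$ a punctured solution (see context). Then the associated map in the Poincaré ball model, $\varphi_P:\overline{\mathbb{S}^m_+}\setminus\{{\bf n}\}\to\mathbb{R}^{m+1}$, $$\varphi_P(x)=\frac{1-e^{-2\rho(x)}+|\nabla e^{-\rho}(x)|^2}{(1+e^{-\rho(x)})^2+|\nabla e^{-\rho}(x)|^2}\,x-\frac{1}{(1+e^{-\rho(x)})^2+|\nabla e^{-\rho}(x)|^2}\,\nabla(e^{-2\rho})(x),$$ admits a $C^1$ extension to $\overline{\mathbb{S}^m_+}$.
   Context: $\mathbb{S}^m\subset\mathbb{R}^{m+1}$ is the unit sphere with round metric $g_0$, gradient $\nabla$, norm $|\cdot|$; ${\bf n}=e_{m+1}$, $\mathbb{S}^m_+=\{x_{m+1}>0\}$. $\lambda(g)$ are the eigenvalues of $g^{-1}\mathrm{Sch}(g)$, $\mathrm{Sch}(g)=\frac{1}{m-2}(\mathrm{Ric}(g)-\frac{R(g)}{2(m-1)}g)$. Elliptic data: $(f,\Gamma)$ with $\Gamma\subset\mathbb{R}^m$ an open convex symmetric cone, $\{x_i>0\ \forall i\}\subset\Gamma\subset\{\sum x_i>0\}$, and $f\in C^0(\overline\Gamma)\cap C^1(\Gamma)$ symmetric, $f=0$ on $\partial\Gamma$, $f>0$ on $\Gamma$, homogeneous of degree 1, all partial derivatives of $f$ positive on $\Gamma$. A punctured solution is a conformal metric $g=e^{2\rho}g_0$ on $\overline{\mathbb{S}^m_+}\setminus\{{\bf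 n}\}$ with $f(\lambda(g))=0$ (and $\lambda(g)\in\overline\Gamma$) in $\mathbb{S}^m_+\setminus\{{\bf n}\}$, $h(g)=-e^{-\rho}\langle\nabla\rho,e_{m+1}\rangle=0$ on $\partial\mathbb{S}^m_+$, and such that $\sigma=e^{-\rho}$ admits a $C^2$ extension $\tilde\sigma$ to $\overline{\mathbb{S}^m_+}$ with $\tilde\sigma({\bf n})=0$. *)

theory Defs
  imports "HOL-Analysis.Analysis"
begin

definition C1_on :: "'a::real_normed_vector set \<Rightarrow> ('a \<Rightarrow> 'b::real_normed_vector) \<Rightarrow> bool" where
  "C1_on U F \<longleftrightarrow> (\<exists>F'. (\<forall>x\<in>U. (F has_derivative blinfun_apply (F' x)) (at x)) \<and> continuous_on U F')"

definition C2_on :: "'a::real_normed_vector set \<Rightarrow> ('a \<Rightarrow> 'b::real_normed_vector) \<Rightarrow> bool" where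
  "C2_on U F \<longleftrightarrow> (\<exists>F'. (\<forall>x\<in>U. (F has_derivative blinfun_apply (F' x)) (at x)) \<and> C1_on U F')"

definition elliptic_data :: "(real^'m \<Rightarrow> real) \<Rightarrow> (real^'m) set \<Rightarrow> bool" where
  "elliptic_data f \<Gamma> \<longleftrightarrow>
     open \<Gamma> \<and> convex \<Gamma> \<and> (\<forall>x\<in>\<Gamma>. \<forall>t>0. t *\<^sub>R x \<in> \<Gamma>) \<and>
     (\<forall>p x. p permutes (UNIV::'m set) \<longrightarrow> ((\<chi> i. x $ p i) \<in> \<Gamma> \<longleftrightarrow> x \<in> \<Gamma>)) \<and>
     {x. \<forall>i. x $ i > 0} \<subseteq> \<Gamma> \<and> \<Gamma> \<subseteq> {x. (\<Sum>i\<in>UNIV. x $ i) > 0} \<and>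
     continuous_on (closure \<Gamma>) f \<and> C1_on \<Gamma> f \<and>
     (\<forall>p. \<forall>x\<in>closure \<Gamma>. p permutes (UNIV::'m set) \<longrightarrow> f (\<chi> i. x $ p i) = f x) \<and>
     (\<forall>x\<in>frontier \<Gamma>. f x = 0) \<and> (\<forall>x\<in>\<Gamma>. f x > 0) \<and>
     (\<forall>x\<in>closure \<Gamma>. \<forall>t>0. f (t *\<^sub>R x) = t * f x) \<and>
     (\<forall>x\<in>\<Gamma>. \<forall>i. frechet_derivative f (at x) (axis i 1) > 0)"

text \<open>n is the north pole; the sphere is the unit sphere of the ambient Euclidean space.\<close>
definition closed_hemi :: "'a::euclidean_space \<Rightarrow> 'a set" where
  "closed_hemi n = {x. norm x = 1 \<and> x \<bullet> n \<ge> 0}"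

definition open_hemi :: "'a::euclidean_space \<Rightarrow> 'a set" where
  "open_hemi n = {x. norm x = 1 \<and> x \<bullet> n > 0}"

definition hemi_boundary :: "'a::euclidean_space \<Rightarrow> 'a set" where
  "hemi_boundary n = {x. norm x = 1 \<and> x \<bullet> n = 0}"

text \<open>Cone over the closed hemisphere (used to take one-sided derivatives at the boundary).\<close>
definition hemi_cone :: "'a::euclidean_space \<Rightarrow> 'a set" where
  "hemi_cone n = {y. y \<bullet> n \<ge> 0 \<and> y \<noteq> 0}"

definition radial :: "('a::euclidean_space \<Rightarrow> real) \<Rightarrow> 'a \<Rightarrow> real" where
  "radial u = (\<lambda>y. u (y /\<^sub>R norm y))"

text \<open>Spherical gradient: Euclidean gradient of the homogeneous extension (tangent to the sphere).\<close>
definition sgrad :: "'a::euclidean_space \<Rightarrow> ('a \<Rightarrow> real) \<Rightarrow> 'a \<Rightarrow> 'a" where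
  "sgrad n u x = (\<Sum>b\<in>Basis. frechet_derivative (radial u) (at x within hemi_cone n) b *\<^sub>R b)"

text \<open>Spherical Hessian on tangent vectors: Euclidean Hessian of the degree-0 homogeneous
  extension (the correction term x-derivative vanishes by homogeneity).\<close>
definition shess :: "'a::euclidean_space \<Rightarrow> ('a \<Rightarrow> real) \<Rightarrow> 'a \<Rightarrow> 'a \<Rightarrow> 'a \<Rightarrow> real" where
  "shess n u x v w = frechet_derivative
      (\<lambda>y. frechet_derivative (radial u) (at y within hemi_cone n) v) (at x within hemi_cone n) w"

text \<open>Schouten tensor of g = e^{2 rho} g_0 on the round sphere (Sch(g_0) = g_0/2):
  Sch(g) = Sch(g_0) - Hess rho + d rho (x) d rho - |grad rho|^2 g_0 / 2.\<close>
definition schouten :: "'a::euclidean_space \<Rightarrow> ('a \<Rightarrow> real) \<Rightarrow> 'a \<Rightarrow> 'a \<Rightarrow> 'a \<Rightarrow> real" where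
  "schouten n \<rho> x v w =
     (v \<bullet> w) / 2 - shess n \<rho> x v w + (sgrad n \<rho> x \<bullet> v) * (sgrad n \<rho> x \<bullet> w)
     - (norm (sgrad n \<rho> x))\<^sup>2 * (v \<bullet> w) / 2"

text \<open>lam is a (ordered) vector of the eigenvalues of g^{-1} Sch(g) at x: there is a
  g_0-orthonormal basis e of the tangent space T_x S^m with Sch(g)(e_i, .) = lam_i g(e_i, .).\<close>
definition schouten_eigs :: "'a::euclidean_space \<Rightarrow> ('a \<Rightarrow> real) \<Rightarrow> 'a \<Rightarrow> real^'m \<Rightarrow> bool" where
  "schouten_eigs n \<rho> x lam \<longleftrightarrow>
     (\<exists>e::'m \<Rightarrow> 'a. (\<forall>i j. e i \<bullet> e j = (if i = j then 1 else 0)) \<and> (\<forall>i. e i \<bullet> x = 0) \<and>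
        (\<forall>i w. w \<bullet> x = 0 \<longrightarrow> schouten n \<rho> x (e i) w = lam $ i * (exp (2 * \<rho> x) * (e i \<bullet> w))))"

definition punctured_solution ::
    "(real^'m \<Rightarrow> real) \<Rightarrow> (real^'m) set \<Rightarrow> 'a::euclidean_space \<Rightarrow> ('a \<Rightarrow> real) \<Rightarrow> bool" where
  "punctured_solution f \<Gamma> n \<rho> \<longleftrightarrow>
     (\<forall>x\<in>open_hemi n - {n}. \<exists>lam::real^'m. schouten_eigs n \<rho> x lam \<and> lam \<in> closure \<Gamma> \<and> f lam = 0) \<and>
     (\<forall>x\<in>hemi_boundary n. - exp (- \<rho> x) * (sgrad n \<rho> x \<bullet> n) = 0) \<and>
     (\<exists>U \<sigma>. open U \<and> closed_hemi n \<subseteq> U \<and> C2_on U (\<sigma> :: 'a \<Rightarrow> real) \<and> \<sigma> n = 0 \<and>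
        (\<forall>x\<in>closed_hemi n - {n}. \<sigma> x = exp (- \<rho> x)))"

definition phiP :: "'a::euclidean_space \<Rightarrow> ('a \<Rightarrow> real) \<Rightarrow> 'a \<Rightarrow> 'a" where
  "phiP n \<rho> x =
    (let G = sgrad n (\<lambda>y. exp (- \<rho> y)) x;
         D = (1 + exp (- \<rho> x))\<^sup>2 + (norm G)\<^sup>2
     in ((1 - exp (- 2 * \<rho> x) + (norm G)\<^sup>2) / D) *\<^sub>R x
        - (1 / D) *\<^sub>R sgrad n (\<lambda>y. exp (- 2 * \<rho> y)) x)"

end

theory Submission imports Defs begin

text \<open>Write \<open>\<sigma> = exp (- \<rho>)\<close>. Since \<open>\<sigma>\<close> extends to a \<open>C\<^sup>2\<close> function across the pole, the
  spherical gradients of \<open>exp (- \<rho>) = \<sigma>\<close> and \<open>exp (- 2 \<rho>) = \<sigma>\<^sup>2\<close> are \<open>G = \<nabla>\<sigma> - (x \<bullet> \<nabla>\<sigma>) x\<close>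
  and \<open>2 \<sigma> G\<close>, the tangential parts of Euclidean gradients, and these are \<open>C\<^sup>1\<close> up to the pole.
  So \<open>\<phi>\<^sub>P\<close> is a rational expression in \<open>x\<close>, \<open>\<sigma>\<close> and \<open>G\<close>, whose denominator
  \<open>(1 + \<sigma>)\<^sup>2 + |G|\<^sup>2\<close> stays positive on the neighbourhood \<open>\<sigma> > -1\<close> of the closed hemisphere.\<close>

text \<open>Continuity of the derivative is only required against each fixed vector (strong operator
  topology), which keeps bounded linear functions out of the calculus rules.\<close>
definition C1_strong_on :: "'a::real_normed_vector set \<Rightarrow> ('a \<Rightarrow> 'b::real_normed_vector) \<Rightarrow> bool" where
  "C1_strong_on U F \<longleftrightarrow>
     (\<exists>F'. (\<forall>x\<in>U. (F has_derivative F' x) (at x)) \<and> (\<forall>v. continuous_on U (\<lambda>x. F' x v)))"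

lemma C1_strong_on_continuous_on: "C1_strong_on U F \<Longrightarrow> continuous_on U F"
  unfolding C1_strong_on_def
  by (meson continuous_at_imp_continuous_on has_derivative_continuous)

lemma C1_strong_on_subset: "C1_strong_on U F \<Longrightarrow> V \<subseteq> U \<Longrightarrow> C1_strong_on V F"
  unfolding C1_strong_on_def by (blast intro: continuous_on_subset)

lemma C1_strong_on_const: "C1_strong_on U (\<lambda>x. c)"
  unfolding C1_strong_on_def by (rule exI[of _ "\<lambda>x h. 0"]) auto

lemma C1_strong_on_ident: "C1_strong_on U (\<lambda>x. x)"
  unfolding C1_strong_on_def by (rule exI[of _ "\<lambda>x h. h"]) auto

lemma C1_strong_on_add:
  assumes "C1_strong_on U f" and "C1_strong_on U g"
  shows "C1_strong_on U (\<lambda>x. f x + g x)"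
proof -
  obtain F' G' where "\<forall>x\<in>U. (f has_derivative F' x) (at x)" "\<forall>v. continuous_on U (\<lambda>x. F' x v)"
    and "\<forall>x\<in>U. (g has_derivative G' x) (at x)" "\<forall>v. continuous_on U (\<lambda>x. G' x v)"
    using assms unfolding C1_strong_on_def by blast
  then show ?thesis
    unfolding C1_strong_on_def
    by (intro exI[of _ "\<lambda>x h. F' x h + G' x h"]) (auto intro!: has_derivative_add continuous_on_add)
qed

lemma C1_strong_on_sum:
  "finite I \<Longrightarrow> (\<And>i. i \<in> I \<Longrightarrow> C1_strong_on U (f i)) \<Longrightarrow> C1_strong_on U (\<lambda>x. \<Sum>i\<in>I. f i x)"
  by (induction I rule: finite_induct) (auto intro: C1_strong_on_add C1_strong_on_const)

lemma C1_strong_on_bilinear: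
  assumes bil: "bounded_bilinear bil"
    and f: "C1_strong_on U f" and g: "C1_strong_on U g"
  shows "C1_strong_on U (\<lambda>x. bil (f x) (g x))"
proof -
  have cf: "continuous_on U f" and cg: "continuous_on U g"
    using f g by (auto intro: C1_strong_on_continuous_on)
  obtain F' G' where F': "\<forall>x\<in>U. (f has_derivative F' x) (at x)" "\<forall>v. continuous_on U (\<lambda>x. F' x v)"
    and G': "\<forall>x\<in>U. (g has_derivative G' x) (at x)" "\<forall>v. continuous_on U (\<lambda>x. G' x v)"
    using f g unfolding C1_strong_on_def by blast
  show ?thesis
    unfolding C1_strong_on_def
  proof (intro exI[of _ "\<lambda>x h. bil (f x) (G' x h) + bil (F' x h) (g x)"] conjI ballI allI)
    fix x assume "x \<in> U"
    then show "((\<lambda>x. bil (f x) (g x)) has_derivative (\<lambda>h. bil (f x) (G' x h) + bil (F' x h) (g x))) (at x)"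
      using bounded_bilinear.FDERIV[OF bil] F' G' by blast
  next
    fix v
    show "continuous_on U (\<lambda>x. bil (f x) (G' x v) + bil (F' x v) (g x))"
      using bounded_bilinear.continuous_on[OF bil cf G'(2)[rule_format]]
        bounded_bilinear.continuous_on[OF bil F'(2)[rule_format] cg]
      by (rule continuous_on_add)
  qed
qed

lemmas C1_strong_on_scaleR = C1_strong_on_bilinear[OF bounded_bilinear_scaleR]
lemmas C1_strong_on_mult = C1_strong_on_bilinear[OF bounded_bilinear_mult]
lemmas C1_strong_on_inner = C1_strong_on_bilinear[OF bounded_bilinear_inner]
lemmas C1_strong_on_blinfun_apply = C1_strong_on_bilinear[OF bounded_bilinear_blinfun_apply]

lemma C1_strong_on_diff:
  assumes "C1_strong_on U f" and "C1_strong_on U g"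
  shows "C1_strong_on U (\<lambda>x. f x - g x)"
proof -
  have "C1_strong_on U (\<lambda>x. f x + (- 1) *\<^sub>R g x)"
    by (intro C1_strong_on_add C1_strong_on_scaleR C1_strong_on_const assms)
  then show ?thesis by simp
qed

lemma C1_strong_on_divide:
  fixes f g :: "'a::real_normed_vector \<Rightarrow> real"
  assumes f: "C1_strong_on U f" and g: "C1_strong_on U g" and nz: "\<forall>x\<in>U. g x \<noteq> 0"
  shows "C1_strong_on U (\<lambda>x. f x / g x)"
proof -
  have cf: "continuous_on U f" and cg: "continuous_on U g"
    using f g by (auto intro: C1_strong_on_continuous_on)
  obtain F' G' where F': "\<forall>x\<in>U. (f has_derivative F' x) (at x)" "\<forall>v. continuous_on U (\<lambda>x. F' x v)"
    and G': "\<forall>x\<in>U. (g has_derivative G' x) (at x)" "\<forall>v. continuous_on U (\<lambda>x. G' x v)"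
    using f g unfolding C1_strong_on_def by blast
  show ?thesis
    unfolding C1_strong_on_def
  proof (intro exI[of _ "\<lambda>x h. - f x * (inverse (g x) * G' x h * inverse (g x)) + F' x h / g x"]
      conjI ballI allI)
    fix x assume "x \<in> U"
    then show "((\<lambda>x. f x / g x) has_derivative
        (\<lambda>h. - f x * (inverse (g x) * G' x h * inverse (g x)) + F' x h / g x)) (at x)"
      using has_derivative_divide F' G' nz by blast
  next
    fix v
    show "continuous_on U (\<lambda>x. - f x * (inverse (g x) * G' x v * inverse (g x)) + F' x v / g x)"
      using F'(2) G'(2) cf cg nz
      by (intro continuous_on_add continuous_on_mult continuous_on_minus continuous_on_divide
          continuous_on_inverse) auto
  qed
qed

lemma C1_strong_on_iff_C1_on:
  fixes F :: "'a::euclidean_space \<Rightarrow> 'b::real_normed_vector"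
  shows "C1_strong_on U F \<longleftrightarrow> C1_on U F"
proof
  assume "C1_strong_on U F"
  then obtain F' where F': "\<forall>x\<in>U. (F has_derivative F' x) (at x)"
    and cont: "\<forall>v. continuous_on U (\<lambda>x. F' x v)"
    unfolding C1_strong_on_def by blast
  define B where "B x = Blinfun (F' x)" for x
  have B: "blinfun_apply (B x) = F' x" if "x \<in> U" for x
    unfolding B_def using F' that by (metis bounded_linear_Blinfun_apply has_derivative_bounded_linear)
  have "continuous_on U B"
    by (rule continuous_on_blinfun_componentwise) (use cont B in \<open>simp cong: continuous_on_cong\<close>)
  then show "C1_on U F"
    unfolding C1_on_def using F' B by (intro exI[of _ B]) auto
next
  assume "C1_on U F"
  then obtain F' where "\<forall>x\<in>U. (F has_derivative blinfun_apply (F' x)) (at x)" "continuous_on U F'"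
    unfolding C1_on_def by blast
  then show "C1_strong_on U F"
    unfolding C1_strong_on_def
    by (intro exI[of _ "\<lambda>x. blinfun_apply (F' x)"])
       (auto intro: bounded_bilinear.continuous_on[OF bounded_bilinear_blinfun_apply])
qed

lemma C2_on_imp_C1_strong_on:
  fixes F :: "'a::euclidean_space \<Rightarrow> 'b::real_normed_vector"
  assumes "C2_on U F"
  obtains F' where "\<forall>x\<in>U. (F has_derivative blinfun_apply (F' x)) (at x)"
    and "C1_strong_on U F'" and "C1_strong_on U F"
proof -
  obtain F' where F': "\<forall>x\<in>U. (F has_derivative blinfun_apply (F' x)) (at x)" and "C1_on U F'"
    using assms unfolding C2_on_def by blast
  moreover have "C1_on U F"
    unfolding C1_on_def using F' C1_strong_on_continuous_on \<open>C1_on U F'\<close>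
    by (auto simp flip: C1_strong_on_iff_C1_on)
  ultimately show ?thesis
    using that by (simp flip: C1_strong_on_iff_C1_on)
qed

lemma has_derivative_normalize_unit:
  fixes x :: "'a::real_inner"
  assumes "norm x = 1"
  shows "((\<lambda>y. y /\<^sub>R norm y) has_derivative (\<lambda>h. h - (x \<bullet> h) *\<^sub>R x)) (at x)"
proof -
  have x0: "x \<noteq> 0" using assms by auto
  have "((\<lambda>y. inverse (norm y) *\<^sub>R y) has_derivative
      (\<lambda>h. inverse (norm x) *\<^sub>R h + (- (inverse (norm x) * (h \<bullet> sgn x) * inverse (norm x))) *\<^sub>R x)) (at x)"
    using has_derivative_scaleR[OF has_derivative_compose[OF has_derivative_norm[OF x0]
        has_derivative_inverse'] has_derivative_ident] x0
    by simp
  then show ?thesis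
    using assms by (simp add: sgn_div_norm inner_commute)
qed

lemma frechet_derivative_within_hemi_cone:
  fixes n :: "'a::euclidean_space"
  assumes n: "n \<in> Basis" and x: "x \<in> hemi_cone n"
    and D: "(F has_derivative D) (at x within hemi_cone n)"
  shows "frechet_derivative F (at x within hemi_cone n) = D"
proof -
  have "F differentiable (at x within hemi_cone n)"
    using D unfolding differentiable_def by blast
  then have "(F has_derivative frechet_derivative F (at x within hemi_cone n)) (at x within hemi_cone n)"
    unfolding frechet_derivative_works .
  then show ?thesis
  proof (rule frechet_derivative_unique_within[OF _ D])
    fix i :: 'a and e :: real assume i: "i \<in> Basis" and e: "e > 0"
    have "norm x > 0"
      using x by (simp add: hemi_cone_def)
    define d where "d = min (e/2) (norm x / 2)"
    have d: "0 < d" "d < e" "d < norm x"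
      using e \<open>norm x > 0\<close> unfolding d_def by linarith+
    have "i \<bullet> n \<ge> 0"
      using i n by (simp add: inner_Basis)
    then have "(x + d *\<^sub>R i) \<bullet> n \<ge> 0"
      using x d by (simp add: hemi_cone_def inner_add_left)
    moreover have "x + d *\<^sub>R i \<noteq> 0"
    proof
      assume "x + d *\<^sub>R i = 0"
      then have "x = - (d *\<^sub>R i)"
        by (simp add: eq_neg_iff_add_eq_0)
      then have "norm x = d"
        using i d by simp
      then show False
        using d by simp
    qed
    ultimately show "\<exists>d. 0 < \<bar>d\<bar> \<and> \<bar>d\<bar> < e \<and> x + d *\<^sub>R i \<in> hemi_cone n"
      using d by (intro exI[of _ d]) (simp add: hemi_cone_def)
  qed
qed

definition tangential_gradient :: "('a::euclidean_space \<Rightarrow> real) \<Rightarrow> 'a \<Rightarrow> 'a" where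
  "tangential_gradient D x = (\<Sum>b\<in>Basis. D (b - (x \<bullet> b) *\<^sub>R x) *\<^sub>R b)"

lemma tangential_gradient_scale:
  "tangential_gradient (\<lambda>h. c * D h) x = c *\<^sub>R tangential_gradient D x"
  unfolding tangential_gradient_def scaleR_sum_right by simp

lemma C1_strong_on_tangential_gradient:
  fixes S :: "'a::euclidean_space \<Rightarrow> 'a \<Rightarrow>\<^sub>L real"
  assumes "C1_strong_on U S"
  shows "C1_strong_on U (\<lambda>x. tangential_gradient (blinfun_apply (S x)) x)"
  unfolding tangential_gradient_def
  by (intro C1_strong_on_sum finite_Basis C1_strong_on_scaleR C1_strong_on_blinfun_apply assms
      C1_strong_on_diff C1_strong_on_const C1_strong_on_inner C1_strong_on_ident)

text \<open>Near a point of the punctured hemisphere, normalization maps the cone into the punctured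
  hemisphere, so there \<open>radial u\<close> agrees with \<open>\<tau>\<close> composed with normalization.\<close>
lemma sgrad_eq_tangential_gradient:
  fixes n :: "'a::euclidean_space"
  assumes n: "n \<in> Basis" and U: "closed_hemi n \<subseteq> U"
    and \<tau>: "\<forall>x\<in>U. (\<tau> has_derivative T' x) (at x)"
    and eq: "\<forall>y\<in>closed_hemi n - {n}. u y = \<tau> y"
    and x: "x \<in> closed_hemi n - {n}"
  shows "sgrad n u x = tangential_gradient (T' x) x"
proof -
  let ?N = "\<lambda>y::'a. y /\<^sub>R norm y"
  have nx: "norm x = 1" and xc: "x \<in> hemi_cone n"
    using x by (auto simp: closed_hemi_def hemi_cone_def)
  have N: "(?N has_derivative (\<lambda>h. h - (x \<bullet> h) *\<^sub>R x)) (at x)"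
    using nx by (rule has_derivative_normalize_unit)
  have Nx: "?N x = x"
    using nx by simp
  have "dist x n > 0"
    using x by auto
  with has_derivative_continuous[OF N] obtain d
    where d: "d > 0" "\<And>y. dist y x < d \<Longrightarrow> dist (?N y) (?N x) < dist x n"
    unfolding continuous_at_eps_delta by blast
  have "((\<lambda>y. \<tau> (?N y)) has_derivative (\<lambda>h. T' x (h - (x \<bullet> h) *\<^sub>R x))) (at x within hemi_cone n)"
    using has_derivative_compose[OF has_derivative_at_withinI[OF N], of \<tau> "T' x"] \<tau> U x Nx by auto
  then have "(radial u has_derivative (\<lambda>h. T' x (h - (x \<bullet> h) *\<^sub>R x))) (at x within hemi_cone n)"
  proof (rule has_derivative_transform_within[OF _ d(1) xc])
    fix y assume y: "y \<in> hemi_cone n" "dist y x < d"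
    have "y \<noteq> 0" "y \<bullet> n \<ge> 0"
      using y(1) by (auto simp: hemi_cone_def)
    moreover have "?N y \<noteq> n"
      using d(2)[OF y(2)] Nx by (auto simp: dist_commute)
    ultimately have "?N y \<in> closed_hemi n - {n}"
      by (simp add: closed_hemi_def)
    then show "\<tau> (?N y) = radial u y" using eq by (simp add: radial_def)
  qed
  then have "frechet_derivative (radial u) (at x within hemi_cone n) = (\<lambda>h. T' x (h - (x \<bullet> h) *\<^sub>R x))"
    by (rule frechet_derivative_within_hemi_cone[OF n xc])
  then show ?thesis
    unfolding sgrad_def tangential_gradient_def by simp
qed

definition poincare_map :: "real \<Rightarrow> 'a::real_inner \<Rightarrow> 'a \<Rightarrow> 'a" where
  "poincare_map s G x =
    (let D = (1 + s)\<^sup>2 + (norm G)\<^sup>2 in ((1 - s\<^sup>2 + (norm G)\<^sup>2) / D) *\<^sub>R x - (2 * s / D) *\<^sub>R G)"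

lemma C1_strong_on_poincare_map:
  fixes G :: "'a::real_inner \<Rightarrow> 'a"
  assumes \<sigma>: "C1_strong_on V \<sigma>" and G: "C1_strong_on V G" and gt: "\<forall>x\<in>V. \<sigma> x > -1"
  shows "C1_strong_on V (\<lambda>x. poincare_map (\<sigma> x) (G x) x)"
proof -
  have "(1 + \<sigma> x) * (1 + \<sigma> x) + G x \<bullet> G x > 0" if "x \<in> V" for x
    using gt that by (intro add_pos_nonneg) auto
  then have "C1_strong_on V (\<lambda>x. ((1 - \<sigma> x * \<sigma> x + G x \<bullet> G x) / ((1 + \<sigma> x) * (1 + \<sigma> x) + G x \<bullet> G x))
      *\<^sub>R x - (2 * \<sigma> x / ((1 + \<sigma> x) * (1 + \<sigma> x) + G x \<bullet> G x)) *\<^sub>R G x)"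
    by (intro C1_strong_on_diff C1_strong_on_scaleR C1_strong_on_divide C1_strong_on_ident
        C1_strong_on_const C1_strong_on_add C1_strong_on_mult C1_strong_on_inner \<sigma> G)
       (auto simp: less_imp_neq[symmetric])
  then show ?thesis
    by (simp add: poincare_map_def Let_def power2_eq_square flip: power2_norm_eq_inner)
qed

lemma phiP_eq_poincare_map:
  assumes "sgrad n (\<lambda>y. exp (- \<rho> y)) x = G"
    and "sgrad n (\<lambda>y. exp (- 2 * \<rho> y)) x = (2 * exp (- \<rho> x)) *\<^sub>R G"
  shows "phiP n \<rho> x = poincare_map (exp (- \<rho> x)) G x"
proof -
  have "exp (- 2 * \<rho> x) = (exp (- \<rho> x))\<^sup>2"
    by (simp flip: exp_of_nat_mult)
  then show ?thesis
    unfolding phiP_def poincare_map_def Let_def assms by simp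
qed

lemma phiP_eq_poincare_map_of_extension:
  fixes n :: "'a::euclidean_space"
  assumes n: "n \<in> Basis" and U: "closed_hemi n \<subseteq> U"
    and \<sigma>: "\<forall>x\<in>U. (\<sigma> has_derivative S' x) (at x)"
    and \<sigma>\<rho>: "\<forall>y\<in>closed_hemi n - {n}. \<sigma> y = exp (- \<rho> y)"
    and x: "x \<in> closed_hemi n - {n}"
  shows "phiP n \<rho> x = poincare_map (\<sigma> x) (tangential_gradient (S' x) x) x"
proof -
  have "\<forall>x\<in>U. ((\<lambda>y. \<sigma> y * \<sigma> y) has_derivative (\<lambda>h. 2 * \<sigma> x * S' x h)) (at x)"
    using \<sigma> by (auto intro: has_derivative_eq_rhs[OF has_derivative_mult] simp: algebra_simps)
  moreover have "\<forall>y\<in>closed_hemi n - {n}. exp (- 2 * \<rho> y) = \<sigma> y * \<sigma> y"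
    using \<sigma>\<rho> by (simp flip: exp_add)
  ultimately have "sgrad n (\<lambda>y. exp (- 2 * \<rho> y)) x = tangential_gradient (\<lambda>h. 2 * \<sigma> x * S' x h) x"
    by (rule sgrad_eq_tangential_gradient[OF n U _ _ x])
  moreover have \<sigma>x: "\<sigma> x = exp (- \<rho> x)"
    using \<sigma>\<rho> x by blast
  ultimately have "sgrad n (\<lambda>y. exp (- 2 * \<rho> y)) x
      = (2 * exp (- \<rho> x)) *\<^sub>R tangential_gradient (S' x) x"
    by (simp only: tangential_gradient_scale)
  moreover have "sgrad n (\<lambda>y. exp (- \<rho> y)) x = tangential_gradient (S' x) x"
    using \<sigma>\<rho> by (intro sgrad_eq_tangential_gradient[OF n U \<sigma> _ x]) simp
  ultimately show ?thesis
    unfolding \<sigma>x by (rule phiP_eq_poincare_map[rotated])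
qed

theorem mainTheorem14:
  fixes f :: "real^'m \<Rightarrow> real" and \<Gamma> :: "(real^'m) set"
    and n :: "'a::euclidean_space" and \<rho> :: "'a \<Rightarrow> real"
  assumes "CARD('m) \<ge> 3"
    and "DIM('a) = CARD('m) + 1"
    and "n \<in> Basis"
    and "elliptic_data f \<Gamma>"
    and "punctured_solution f \<Gamma> n \<rho>"
  shows "\<exists>U \<Phi>. open U \<and> closed_hemi n \<subseteq> U \<and> C1_on U (\<Phi> :: 'a \<Rightarrow> 'a) \<and>
           (\<forall>x\<in>closed_hemi n - {n}. \<Phi> x = phiP n \<rho> x)"
proof -
  obtain U \<sigma> where U: "open U" "closed_hemi n \<subseteq> U" and C2: "C2_on U \<sigma>" and \<sigma>n: "\<sigma> n = 0"
    and \<sigma>\<rho>: "\<forall>x\<in>closed_hemi n - {n}. \<sigma> x = exp (- \<rho> x)"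
    using assms(5) unfolding punctured_solution_def by blast
  obtain S where S: "\<forall>x\<in>U. (\<sigma> has_derivative blinfun_apply (S x)) (at x)"
    and "C1_strong_on U S" and \<sigma>: "C1_strong_on U \<sigma>"
    using C2 by (rule C2_on_imp_C1_strong_on)
  define G where "G x = tangential_gradient (blinfun_apply (S x)) x" for x
  define V where "V = U \<inter> \<sigma> -` {-1<..}"
  have "open V"
    using continuous_open_preimage[OF C1_strong_on_continuous_on[OF \<sigma>] U(1)] by (simp add: V_def)
  have "\<sigma> x > -1" if "x \<in> closed_hemi n" for x
    using \<sigma>n \<sigma>\<rho> that by (cases "x = n") (auto intro: less_trans[OF _ exp_gt_zero])
  then have "closed_hemi n \<subseteq> V"
    using U(2) by (auto simp: V_def)
  moreover have "C1_on V (\<lambda>x. poincare_map (\<sigma> x) (G x) x)"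
    unfolding G_def C1_strong_on_iff_C1_on[symmetric]
    by (intro C1_strong_on_poincare_map C1_strong_on_subset[OF \<sigma>]
        C1_strong_on_subset[OF C1_strong_on_tangential_gradient[OF \<open>C1_strong_on U S\<close>]])
       (auto simp: V_def)
  moreover have "\<forall>x\<in>closed_hemi n - {n}. poincare_map (\<sigma> x) (G x) x = phiP n \<rho> x"
    unfolding G_def using phiP_eq_poincare_map_of_extension[OF assms(3) U(2) S \<sigma>\<rho>] by simp
  ultimately show ?thesis
    using \<open>open V\<close> by blast
qed

end
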